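(* Let $H$ be a connected $3$-regular multigraph embedded on a sphere. Then for every loop of $H$, one of the two open disks into which the loop separates the sphere is a face of $H$.
   Context: A loop contributes $2$ to the degree of its vertex and is embedded as a closed curve through its vertex. *)

theory Defs
  imports "HOL-Analysis.Analysis"
begin

text \<open>A finite multigraph (loops and parallel edges allowed): vertex set V, edge set E,
  each edge e has end vertices src e and tgt e; e is a loop iff src e = tgt e.\<close>

definition multigraph :: "'v set \<Rightarrow> 'e set \<Rightarrow> ('e \<Rightarrow> 'v) \<Rightarrow> ('e \<Rightarrow> 'v) \<Rightarrow> bool" where
  "multigraph V E src tgt \<longleftrightarrow> finite V \<and> finite E \<and> (\<forall>e\<in>E. src e \<in> V \<and> tgt e \<in> V)"

text \<open>Degree: a loop contributes 2 (it is counted once as src and once as tgt).\<close>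
definition mg_degree :: "'e set \<Rightarrow> ('e \<Rightarrow> 'v) \<Rightarrow> ('e \<Rightarrow> 'v) \<Rightarrow> 'v \<Rightarrow> nat" where
  "mg_degree E src tgt v = card {e\<in>E. src e = v} + card {e\<in>E. tgt e = v}"

definition mg_adj :: "'e set \<Rightarrow> ('e \<Rightarrow> 'v) \<Rightarrow> ('e \<Rightarrow> 'v) \<Rightarrow> 'v \<Rightarrow> 'v \<Rightarrow> bool" where
  "mg_adj E src tgt x y \<longleftrightarrow> (\<exists>e\<in>E. (src e = x \<and> tgt e = y) \<or> (src e = y \<and> tgt e = x))"

definition mg_connected :: "'v set \<Rightarrow> 'e set \<Rightarrow> ('e \<Rightarrow> 'v) \<Rightarrow> ('e \<Rightarrow> 'v) \<Rightarrow> bool" where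
  "mg_connected V E src tgt \<longleftrightarrow> V \<noteq> {} \<and> (\<forall>u\<in>V. \<forall>v\<in>V. (mg_adj E src tgt)\<^sup>*\<^sup>* u v)"

abbreviation S2 :: "(real^3) set" where "S2 \<equiv> sphere 0 1"

definition sphere_embedding ::
  "'v set \<Rightarrow> 'e set \<Rightarrow> ('e \<Rightarrow> 'v) \<Rightarrow> ('e \<Rightarrow> 'v) \<Rightarrow> ('v \<Rightarrow> real^3) \<Rightarrow> ('e \<Rightarrow> real \<Rightarrow> real^3) \<Rightarrow> bool" where
  "sphere_embedding V E src tgt pos crv \<longleftrightarrow>
     inj_on pos V \<and> pos ` V \<subseteq> S2 \<and>
     (\<forall>e\<in>E. path_image (crv e) \<subseteq> S2 \<and>
            pathstart (crv e) = pos (src e) \<and> pathfinish (crv e) = pos (tgt e) \<and>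
            (if src e = tgt e then simple_path (crv e) else arc (crv e)) \<and>
            (\<forall>t\<in>{0<..<1}. crv e t \<notin> pos ` V)) \<and>
     (\<forall>e\<in>E. \<forall>e'\<in>E. e \<noteq> e' \<longrightarrow> crv e ` {0<..<1} \<inter> crv e' ` {0<..<1} = {})"

definition drawing :: "'v set \<Rightarrow> 'e set \<Rightarrow> ('v \<Rightarrow> real^3) \<Rightarrow> ('e \<Rightarrow> real \<Rightarrow> real^3) \<Rightarrow> (real^3) set" where
  "drawing V E pos crv = pos ` V \<union> (\<Union>e\<in>E. path_image (crv e))"

definition faces :: "'v set \<Rightarrow> 'e set \<Rightarrow> ('v \<Rightarrow> real^3) \<Rightarrow> ('e \<Rightarrow> real \<Rightarrow> real^3) \<Rightarrow> (real^3) set set" where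
  "faces V E pos crv = components (S2 - drawing V E pos crv)"

end

theory Submission
  imports Defs
begin

text \<open>Let the loop \<open>e\<close> sit at \<open>v\<close>. Since \<open>v\<close> has degree 3, the only other edge at \<open>v\<close> is a
  non-loop edge \<open>f\<close> to some \<open>w \<noteq> v\<close>, so every vertex other than \<open>v\<close> is reachable from \<open>w\<close>
  without passing through \<open>v\<close>. Consequently the drawing minus the curve of \<open>e\<close> is connected,
  and it lies in a single component of the complement of that curve. By the Jordan curve
  theorem the complement has another component; it misses the whole drawing and is therefore
  a face.\<close>

lemma clopen_connected_in_components:
  assumes "S \<noteq> {}" "connected S"
    and "openin (top_of_set U) S" "closedin (top_of_set U) S"
  shows "S \<in> components U"
  unfolding in_components_maximal
proof (intro conjI allI impI)
  show "S \<subseteq> U"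
    using assms(3) openin_imp_subset by blast
  fix T assume T: "T \<noteq> {} \<and> S \<subseteq> T \<and> T \<subseteq> U \<and> connected T"
  then have "openin (top_of_set T) S" "closedin (top_of_set T) S"
    using assms(3,4) openin_subset_trans closedin_subset_trans by blast+
  then show "T = S"
    using T assms(1) connected_clopen by metis
qed (use assms in auto)

lemma component_of_complement_superset:
  assumes "D \<in> components (S - C)" "C \<subseteq> X" "D \<inter> X = {}"
  shows "D \<in> components (S - X)"
  unfolding in_components_maximal
proof (intro conjI allI impI)
  show "D \<noteq> {}" "connected D"
    using assms(1) in_components_maximal by blast+
  show "D \<subseteq> S - X"
    using assms(1,3) in_components_subset by blast
  fix T assume T: "T \<noteq> {} \<and> D \<subseteq> T \<and> T \<subseteq> S - X \<and> connected T"
  then have "T \<subseteq> S - C" "D \<inter> T \<noteq> {}"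
    using assms(2) \<open>D \<noteq> {}\<close> by blast+
  then have "T \<subseteq> D"
    using T components_maximal[OF assms(1)] by simp
  with T show "T = D"
    by blast
qed

lemma sphere_minus_point_homeomorphic_plane:
  assumes "a \<in> S2"
  shows "(S2 - {a}) homeomorphic (UNIV::complex set)"
proof -
  have "(S2 - {a}) homeomorphic {x::real^3. axis 1 1 \<bullet> x = 0}"
    by (rule homeomorphic_punctured_sphere_hyperplane) (use assms in auto)
  also have "\<dots> homeomorphic (UNIV::complex set)"
    by (subst homeomorphic_affine_sets_eq) (auto simp: affine_hyperplane)
  finally show ?thesis .
qed

lemma open_closed_union_in_components:
  assumes "openin (top_of_set S) D" "closed (D \<union> C)" "D \<inter> C = {}"
    and "connected D" "D \<noteq> {}"
  shows "D \<in> components (S - C)"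
proof (rule clopen_connected_in_components)
  have "D \<subseteq> S - C"
    using assms(1,3) openin_imp_subset by blast
  then show "openin (top_of_set (S - C)) D"
    using assms(1) openin_subset_trans by blast
  have "D = (S - C) \<inter> (D \<union> C)"
    using \<open>D \<subseteq> S - C\<close> by blast
  then show "closedin (top_of_set (S - C)) D"
    using assms(2) closedin_closed_Int by metis
qed (use assms in auto)

lemma punctured_sphere_chart_region_in_components:
  assumes hom: "homeomorphism (S2 - {a}) (UNIV::complex set) h k"
    and C: "C \<subseteq> S2 - {a}"
    and B: "B \<noteq> {}" "open B" "connected B" "bounded B" "frontier B = h ` C"
  shows "k ` B \<in> components (S2 - C)"
proof (rule open_closed_union_in_components)
  have k_cont: "continuous_on UNIV k" and kh: "\<And>x. x \<in> S2 - {a} \<Longrightarrow> k (h x) = x"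
    and hk: "\<And>y. h (k y) = y"
    using hom by (auto simp: homeomorphism_def)
  have "openin (top_of_set (S2 - {a})) (k ` B)"
    using homeomorphism_imp_open_map[OF homeomorphism_symD[OF hom], of B] B(2) by simp
  moreover have "openin (top_of_set S2) (S2 - {a})"
    by (simp add: openin_delete)
  ultimately show "openin (top_of_set S2) (k ` B)"
    by (rule openin_trans)
  have "k ` h ` C = C"
    using C kh by (simp add: image_image subset_iff cong: image_cong)
  then have "k ` closure B = k ` B \<union> C"
    using B(2,5) by (simp add: closure_Un_frontier image_Un)
  moreover have "compact (k ` closure B)"
    using B(4) compact_closure compact_continuous_image[OF continuous_on_subset[OF k_cont subset_UNIV]]
    by blast
  ultimately show "closed (k ` B \<union> C)"
    by (simp add: compact_imp_closed)
  have "h ` C = closure B - B"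
    using B(5) interior_open[OF B(2)] by (simp add: frontier_def)
  then have "x \<notin> B" if "k x \<in> C" for x
    using hk[of x] that by (metis Diff_iff image_eqI)
  then show "k ` B \<inter> C = {}"
    by blast
  show "connected (k ` B)"
    using connected_continuous_image[OF continuous_on_subset[OF k_cont] B(3)] by auto
qed (use B(1) in simp)

text \<open>Removing \<open>a\<close> turns the sphere into a plane, and the bounded Jordan region of the image
  curve there is carried back to a complementary component that misses \<open>a\<close>.\<close>

lemma Jordan_sphere_component_avoiding:
  fixes c :: "real \<Rightarrow> real^3"
  assumes c: "simple_path c" "pathfinish c = pathstart c" "path_image c \<subseteq> S2"
    and a: "a \<in> S2 - path_image c"
  obtains D where "D \<in> components (S2 - path_image c)" "a \<notin> D"
proof -
  obtain h k where hom: "homeomorphism (S2 - {a}) (UNIV::complex set) h k"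
    using sphere_minus_point_homeomorphic_plane a homeomorphic_def by blast
  have C: "path_image c \<subseteq> S2 - {a}"
    using c(3) a by auto
  have "inj_on h (S2 - {a})"
    using homeomorphism_apply1[OF hom] by (rule inj_on_inverseI)
  then have "simple_path (h \<circ> c)"
    using simple_path_continuous_image[OF c(1) continuous_on_subset[OF homeomorphism_cont1[OF hom] C]]
      inj_on_subset[OF _ C] by blast
  moreover have "pathfinish (h \<circ> c) = pathstart (h \<circ> c)"
    using c(2) by (simp add: pathfinish_def pathstart_def)
  ultimately obtain B where B: "B \<noteq> {}" "open B" "connected B" "bounded B"
      "frontier B = path_image (h \<circ> c)"
    by (metis Jordan_curve)
  show thesis
  proof (rule that)
    show "k ` B \<in> components (S2 - path_image c)"
      using punctured_sphere_chart_region_in_components[OF hom C B(1-4)] B(5)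
      by (simp add: path_image_compose)
    show "a \<notin> k ` B"
      using hom by (auto simp: homeomorphism_def)
  qed
qed

lemma sphere_curve_component_missing_connected_rest:
  fixes c :: "real \<Rightarrow> real^3"
  assumes c: "simple_path c" "pathfinish c = pathstart c"
    and X: "path_image c \<subseteq> X" "X \<subseteq> S2"
    and rest: "connected (X - path_image c)" "a \<in> X - path_image c"
  shows "\<exists>D \<in> components (S2 - path_image c). D \<in> components (S2 - X)"
proof -
  obtain D where D: "D \<in> components (S2 - path_image c)" "a \<notin> D"
    using Jordan_sphere_component_avoiding[OF c] X rest(2) by blast
  have "D \<inter> (X - path_image c) = {}"
    using components_maximal[OF D(1) rest(1)] X(2) rest(2) D(2) by blast
  moreover have "D \<inter> path_image c = {}"
    using in_components_subset[OF D(1)] by blast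
  ultimately have "D \<inter> X = {}"
    by blast
  then show ?thesis
    using component_of_complement_superset[OF D(1) X(1)] D(1) by blast
qed

lemma subpath_image_in_connected_component:
  assumes "path \<gamma>" "u \<in> {0..1}" "t \<in> {0..1}" "path_image (subpath u t \<gamma>) \<subseteq> P"
  shows "\<gamma> t \<in> connected_component_set P (\<gamma> u)"
proof -
  have "path_image (subpath u t \<gamma>) \<subseteq> connected_component_set P (\<gamma> u)"
  proof (rule connected_component_maximal)
    show "connected (path_image (subpath u t \<gamma>))"
      using assms(1-3) by (simp add: connected_path_image)
    show "\<gamma> u \<in> path_image (subpath u t \<gamma>)"
      by (metis pathstart_in_path_image pathstart_subpath)
  qed (use assms(4) in blast)
  then show ?thesis
    by (metis pathfinish_in_path_image pathfinish_subpath subsetD)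
qed

lemma loop_at_degree_three_vertex:
  assumes "finite E" "mg_degree E src tgt v = 3" "e \<in> E" "src e = v" "tgt e = v"
  obtains f w where "f \<in> E" "{src f, tgt f} = {v, w}" "w \<noteq> v"
    and "\<And>g. g \<in> E \<Longrightarrow> src g = v \<or> tgt g = v \<Longrightarrow> g = e \<or> g = f"
proof -
  define A where "A = {g \<in> E. src g = v} - {e}"
  define B where "B = {g \<in> E. tgt g = v} - {e}"
  have "0 < card {g \<in> E. src g = v}" "0 < card {g \<in> E. tgt g = v}"
    using assms by (auto simp: card_gt_0_iff)
  then have "card A + card B = 1"
    using assms by (simp add: mg_degree_def A_def B_def card_Diff_singleton)
  then consider "A = {}" "card B = 1" | "B = {}" "card A = 1"
    using assms(1) by (auto simp: A_def B_def add_is_1)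
  then obtain f where AB: "A \<union> B = {f}" "A \<inter> B = {}"
    by cases (auto simp: card_1_singleton_iff)
  then have "f \<in> A \<union> B"
    by simp
  then have f: "f \<in> E" "src f = v \<or> tgt f = v" "src f \<noteq> tgt f"
    using AB(2) by (auto simp: A_def B_def)
  show thesis
  proof (rule that)
    show "{src f, tgt f} = {v, if src f = v then tgt f else src f}"
      using f by auto
    show "(if src f = v then tgt f else src f) \<noteq> v"
      using f by auto
    show "g = e \<or> g = f" if "g \<in> E" "src g = v \<or> tgt g = v" for g
    proof -
      have "g \<in> insert e (A \<union> B)"
        using that by (auto simp: A_def B_def)
      then show ?thesis
        using AB(1) by simp
    qed
  qed (use f in simp)
qed

lemma mg_adj_rtranclp_avoiding_vertex:
  assumes "(mg_adj E src tgt)\<^sup>*\<^sup>* w u"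
    and "\<And>g. g \<in> E \<Longrightarrow> src g = v \<or> tgt g = v \<Longrightarrow> src g = tgt g \<or> {src g, tgt g} = {v, w}"
  shows "u = v \<or> (mg_adj {g \<in> E. src g \<noteq> v \<and> tgt g \<noteq> v} src tgt)\<^sup>*\<^sup>* w u"
  using assms(1)
proof (induction rule: rtranclp_induct)
  case (step y z)
  then obtain g where g: "g \<in> E" "(src g = y \<and> tgt g = z) \<or> (src g = z \<and> tgt g = y)"
    unfolding mg_adj_def by blast
  consider "z = v" | "y = v" "z \<noteq> v" | "y \<noteq> v" "z \<noteq> v"
    by blast
  then show ?case
  proof cases
    case 2
    then have "z = w"
      using assms(2)[OF g(1)] g(2) by auto
    then show ?thesis
      by simp
  next
    case 3
    then have "mg_adj {g \<in> E. src g \<noteq> v \<and> tgt g \<noteq> v} src tgt y z"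
      using g unfolding mg_adj_def by blast
    with 3 step.IH show ?thesis
      by (meson rtranclp.rtrancl_into_rtrancl)
  qed simp
qed simp

locale sphere_multigraph =
  fixes V :: "'v set" and E :: "'e set" and src tgt :: "'e \<Rightarrow> 'v"
    and pos :: "'v \<Rightarrow> real^3" and crv :: "'e \<Rightarrow> real \<Rightarrow> real^3"
  assumes multigraph: "multigraph V E src tgt"
    and embedding: "sphere_embedding V E src tgt pos crv"
begin

lemma finite_edges: "finite E"
  using multigraph by (simp add: multigraph_def)

lemma src_in_vertices: "g \<in> E \<Longrightarrow> src g \<in> V"
  and tgt_in_vertices: "g \<in> E \<Longrightarrow> tgt g \<in> V"
  using multigraph by (auto simp: multigraph_def)

lemma inj_pos: "inj_on pos V"
  using embedding by (simp add: sphere_embedding_def)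

lemma edge_simple_path: "g \<in> E \<Longrightarrow> simple_path (crv g)"
  using embedding by (auto simp: sphere_embedding_def arc_imp_simple_path split: if_splits)

lemma edge_path: "g \<in> E \<Longrightarrow> path (crv g)"
  using edge_simple_path simple_path_imp_path by blast

lemma edge_start: "g \<in> E \<Longrightarrow> crv g 0 = pos (src g)"
  and edge_finish: "g \<in> E \<Longrightarrow> crv g 1 = pos (tgt g)"
  using embedding by (auto simp: sphere_embedding_def pathstart_def pathfinish_def)

lemma edge_interior_not_vertex: "g \<in> E \<Longrightarrow> t \<in> {0<..<1} \<Longrightarrow> crv g t \<notin> pos ` V"
  using embedding by (simp add: sphere_embedding_def)

lemma edge_interiors_disjoint:
  "g \<in> E \<Longrightarrow> h \<in> E \<Longrightarrow> g \<noteq> h \<Longrightarrow> crv g ` {0<..<1} \<inter> crv h ` {0<..<1} = {}"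
  using embedding by (simp add: sphere_embedding_def)

lemma drawing_subset_sphere: "drawing V E pos crv \<subseteq> S2"
  using embedding by (auto simp: sphere_embedding_def drawing_def)

lemma edge_image_subset_drawing: "g \<in> E \<Longrightarrow> path_image (crv g) \<subseteq> drawing V E pos crv"
  by (auto simp: drawing_def)

lemma vertex_on_edge_is_end:
  assumes "g \<in> E" "x \<in> V" "pos x \<in> path_image (crv g)"
  shows "x = src g \<or> x = tgt g"
proof -
  obtain s where s: "s \<in> {0..1}" "pos x = crv g s"
    using assms(3) by (auto simp: path_image_def)
  moreover have "s \<notin> {0<..<1}"
    using edge_interior_not_vertex[OF assms(1)] assms(2) s(2) by (metis image_eqI)
  ultimately have "pos x = pos (src g) \<or> pos x = pos (tgt g)"
    using edge_start[OF assms(1)] edge_finish[OF assms(1)] by fastforce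
  then show ?thesis
    using inj_on_eq_iff[OF inj_pos] assms(2) src_in_vertices[OF assms(1)] tgt_in_vertices[OF assms(1)]
    by blast
qed

lemma edge_meets_other_edge_at_end:
  assumes "g \<in> E" "h \<in> E" "g \<noteq> h" "t \<in> {0..1}" "crv g t \<in> path_image (crv h)"
  shows "t = 0 \<or> t = 1"
proof (rule ccontr)
  assume "\<not> (t = 0 \<or> t = 1)"
  then have t: "t \<in> {0<..<1}"
    using assms(4) by auto
  obtain s where s: "s \<in> {0..1}" "crv g t = crv h s"
    using assms(5) by (auto simp: path_image_def)
  show False
  proof (cases "s \<in> {0<..<1}")
    case True
    then show False
      using edge_interiors_disjoint[OF assms(1-3)] s(2) t by blast
  next
    case False
    then have "s = 0 \<or> s = 1"
      using s(1) by fastforce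
    then have "crv g t \<in> pos ` V"
      using s(2) src_in_vertices[OF assms(2)] tgt_in_vertices[OF assms(2)]
        edge_start[OF assms(2)] edge_finish[OF assms(2)] by auto
    then show False
      using edge_interior_not_vertex[OF assms(1) t] by blast
  qed
qed

text \<open>The segment of \<open>g\<close> between the two parameters avoids the curve of \<open>h\<close>, because \<open>g\<close>
  meets that curve only at its ends.\<close>

lemma edge_point_connected_to_end:
  assumes "g \<in> E" "h \<in> E" "g \<noteq> h" "u \<in> {0, 1}" "t \<in> {0..1}"
    and "crv g u \<notin> path_image (crv h)" "crv g t \<notin> path_image (crv h)"
  shows "crv g t \<in> connected_component_set (drawing V E pos crv - path_image (crv h)) (crv g u)"
proof (rule subpath_image_in_connected_component)
  show "path_image (subpath u t (crv g)) \<subseteq> drawing V E pos crv - path_image (crv h)"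
  proof
    fix x assume "x \<in> path_image (subpath u t (crv g))"
    then obtain s where s: "s \<in> closed_segment u t" "x = crv g s"
      by (auto simp: path_image_subpath_gen)
    have s01: "s \<in> {0..1}"
      using s(1) assms(4,5) by (auto simp: closed_segment_eq_real_ivl split: if_splits)
    have "x \<notin> path_image (crv h)"
    proof
      assume "x \<in> path_image (crv h)"
      then have "s = 0 \<or> s = 1"
        using edge_meets_other_edge_at_end[OF assms(1-3) s01] s(2) by blast
      then have "s = u \<or> s = t"
        using s(1) assms(4,5) by (auto simp: closed_segment_eq_real_ivl split: if_splits)
      then show False
        using \<open>x \<in> path_image (crv h)\<close> s(2) assms(6,7) by blast
    qed
    moreover have "x \<in> path_image (crv g)"
      using s01 s(2) by (simp add: path_image_def)
    ultimately show "x \<in> drawing V E pos crv - path_image (crv h)"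
      using edge_image_subset_drawing[OF assms(1)] by blast
  qed
qed (use assms edge_path in auto)

lemma walk_in_component_off_curve:
  assumes "(mg_adj E' src tgt)\<^sup>*\<^sup>* w u" "w \<in> V" "h \<in> E" "E' \<subseteq> E - {h}"
    and "pos w \<notin> path_image (crv h)"
    and "\<And>g. g \<in> E' \<Longrightarrow> pos (src g) \<notin> path_image (crv h) \<and> pos (tgt g) \<notin> path_image (crv h)"
  shows "pos u \<in> connected_component_set (drawing V E pos crv - path_image (crv h)) (pos w)"
  using assms(1)
proof (induction rule: rtranclp_induct)
  case base
  have "pos w \<in> drawing V E pos crv"
    using assms(2) by (simp add: drawing_def)
  then show ?case
    using assms(5) by simp
next
  case (step y z)
  then obtain g where g: "g \<in> E'" "(src g = y \<and> tgt g = z) \<or> (src g = z \<and> tgt g = y)"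
    unfolding mg_adj_def by blast
  have "g \<in> E" "g \<noteq> h"
    using g(1) assms(4) by auto
  then have "connected_component (drawing V E pos crv - path_image (crv h)) (pos (src g)) (pos (tgt g))"
    using edge_point_connected_to_end[of g h 0 1] assms(3) assms(6)[OF g(1)]
    by (simp add: edge_start edge_finish)
  then have "connected_component (drawing V E pos crv - path_image (crv h)) (pos y) (pos z)"
    using g(2) connected_component_sym by auto
  then show ?case
    using step.IH connected_component_trans by (simp add: connected_component_trans)
qed

end

locale loop_vertex_of_degree_three = sphere_multigraph +
  fixes e f :: 'e and v w :: 'v
  assumes connected: "mg_connected V E src tgt"
    and loop: "e \<in> E" "src e = v" "tgt e = v"
    and edge_to_neighbour: "f \<in> E" "{src f, tgt f} = {v, w}" "w \<noteq> v"
    and edges_at_vertex: "\<And>g. g \<in> E \<Longrightarrow> src g = v \<or> tgt g = v \<Longrightarrow> g = e \<or> g = f"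
begin

definition rest :: "(real^3) set" where
  "rest = drawing V E pos crv - path_image (crv e)"

lemma neighbour_in_vertices: "w \<in> V"
  using edge_to_neighbour src_in_vertices tgt_in_vertices by (metis doubleton_eq_iff)

lemma vertex_in_rest: "x \<in> V \<Longrightarrow> x \<noteq> v \<Longrightarrow> pos x \<in> rest"
  using vertex_on_edge_is_end[OF loop(1)] loop by (auto simp: rest_def drawing_def)

lemma vertex_in_component_of_neighbour:
  assumes "u \<in> V" "u \<noteq> v"
  shows "pos u \<in> connected_component_set rest (pos w)"
proof -
  have "(mg_adj E src tgt)\<^sup>*\<^sup>* w u"
    using connected neighbour_in_vertices assms(1) by (simp add: mg_connected_def)
  moreover have "src g = tgt g \<or> {src g, tgt g} = {v, w}"
    if "g \<in> E" "src g = v \<or> tgt g = v" for g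
    using edges_at_vertex[OF that] loop edge_to_neighbour by auto
  ultimately have "u = v \<or> (mg_adj {g \<in> E. src g \<noteq> v \<and> tgt g \<noteq> v} src tgt)\<^sup>*\<^sup>* w u"
    by (rule mg_adj_rtranclp_avoiding_vertex)
  with assms(2) have "(mg_adj {g \<in> E. src g \<noteq> v \<and> tgt g \<noteq> v} src tgt)\<^sup>*\<^sup>* w u"
    by simp
  then show ?thesis
    unfolding rest_def
  proof (rule walk_in_component_off_curve[OF _ neighbour_in_vertices loop(1)])
    show "{g \<in> E. src g \<noteq> v \<and> tgt g \<noteq> v} \<subseteq> E - {e}"
      using loop by auto
    show "pos w \<notin> path_image (crv e)"
      using vertex_in_rest[OF neighbour_in_vertices edge_to_neighbour(3)] by (simp add: rest_def)
    show "pos (src g) \<notin> path_image (crv e) \<and> pos (tgt g) \<notin> path_image (crv e)"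
      if "g \<in> {g \<in> E. src g \<noteq> v \<and> tgt g \<noteq> v}" for g
      using that vertex_in_rest[of "src g"] vertex_in_rest[of "tgt g"] src_in_vertices tgt_in_vertices
      by (simp add: rest_def)
  qed
qed

lemma edge_point_in_component_of_neighbour:
  assumes "g \<in> E" "t \<in> {0..1}" "crv g t \<in> rest"
  shows "crv g t \<in> connected_component_set rest (pos w)"
proof -
  have "g \<noteq> e"
    using assms(2,3) by (auto simp: rest_def path_image_def)
  then have "src g \<noteq> v \<or> tgt g \<noteq> v"
    using edges_at_vertex[OF assms(1)] edge_to_neighbour(2,3) by auto
  then obtain x u where x: "x \<in> V" "x \<noteq> v" "u \<in> {0, 1}" "crv g u = pos x"
    using edge_start[OF assms(1)] edge_finish[OF assms(1)]
      src_in_vertices[OF assms(1)] tgt_in_vertices[OF assms(1)] by blast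
  then have "crv g t \<in> connected_component_set rest (pos x)"
    using edge_point_connected_to_end[OF assms(1) loop(1) \<open>g \<noteq> e\<close> x(3) assms(2)]
      vertex_in_rest[OF x(1,2)] assms(3) by (simp add: rest_def)
  moreover have "connected_component_set rest (pos x) = connected_component_set rest (pos w)"
    using vertex_in_component_of_neighbour[OF x(1,2)] connected_component_eq by simp
  ultimately show ?thesis
    by simp
qed

lemma connected_rest: "connected rest"
proof -
  have "pos v \<notin> rest"
    using edge_start[OF loop(1)] loop(2) pathstart_in_path_image[of "crv e"]
    by (simp add: rest_def pathstart_def)
  have "rest \<subseteq> connected_component_set rest (pos w)"
  proof
    fix p assume "p \<in> rest"
    then consider x where "x \<in> V" "p = pos x" | g t where "g \<in> E" "t \<in> {0..1}" "p = crv g t"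
      by (auto simp: rest_def drawing_def path_image_def)
    then show "p \<in> connected_component_set rest (pos w)"
    proof cases
      case 1
      then show ?thesis
        using vertex_in_component_of_neighbour \<open>p \<in> rest\<close> \<open>pos v \<notin> rest\<close> by blast
    next
      case 2
      then show ?thesis
        using edge_point_in_component_of_neighbour \<open>p \<in> rest\<close> by blast
    qed
  qed
  then have "rest = connected_component_set rest (pos w)"
    using connected_component_subset by blast
  then show ?thesis
    by (metis connected_connected_component)
qed

end

theorem lemma4p6:
  fixes V :: "'v set" and E :: "'e set" and src tgt :: "'e \<Rightarrow> 'v"
    and pos :: "'v \<Rightarrow> real^3" and crv :: "'e \<Rightarrow> real \<Rightarrow> real^3"
  assumes "multigraph V E src tgt"
    and "mg_connected V E src tgt"
    and "\<forall>v\<in>V. mg_degree E src tgt v = 3"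
    and "sphere_embedding V E src tgt pos crv"
    and "e \<in> E" and "src e = tgt e"
  shows "\<exists>D\<in>components (S2 - path_image (crv e)). D \<in> faces V E pos crv"
proof -
  interpret sphere_multigraph V E src tgt pos crv
    using assms(1,4) by unfold_locales
  define v where "v = src e"
  have loop: "src e = v" "tgt e = v"
    using assms(6) by (simp_all add: v_def)
  have deg: "mg_degree E src tgt v = 3"
    using assms(3,5) src_in_vertices v_def by blast
  obtain f w where f: "f \<in> E" "{src f, tgt f} = {v, w}" "w \<noteq> v"
    and at_v: "\<And>g. g \<in> E \<Longrightarrow> src g = v \<or> tgt g = v \<Longrightarrow> g = e \<or> g = f"
    using loop_at_degree_three_vertex[OF finite_edges deg assms(5) loop] by blast
  interpret loop_vertex_of_degree_three V E src tgt pos crv e f v w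
    using assms(2,5) loop f at_v by unfold_locales auto
  show ?thesis
    unfolding faces_def
  proof (rule sphere_curve_component_missing_connected_rest)
    show "simple_path (crv e)" "pathfinish (crv e) = pathstart (crv e)"
      using edge_simple_path[OF assms(5)] edge_start[OF assms(5)] edge_finish[OF assms(5)] loop
      by (simp_all add: pathstart_def pathfinish_def)
    show "connected (drawing V E pos crv - path_image (crv e))"
      using connected_rest by (simp add: rest_def)
    show "pos w \<in> drawing V E pos crv - path_image (crv e)"
      using vertex_in_rest[OF neighbour_in_vertices f(3)] by (simp add: rest_def)
  qed (use edge_image_subset_drawing[OF assms(5)] drawing_subset_sphere in auto)
qed

end
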